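(* Let $V>0$, $C_0>0$, $A>0$, $0<\delta<1$ with $\delta\neq\frac14$, and $\epsilon$ with $\frac{4\delta}{3\delta+1}\le\epsilon<1$. Let $R\ge2$, and let $E,y:[R,\infty)\to\mathbb R$ be functions with the following properties: 1. $E-y$ is continuous and piecewise differentiable, with $\frac{d(E-y)}{dr}=\frac{y}{r}$ wherever it is differentiable; 2. $|y(r)|\le C_0r^{-1/3}|E(r)|^{4/3}$ for all $r\ge R$; 3. $|E(r)-RV|\le A(r^\delta+R^\epsilon)$ for all $r\ge R$. Then there is a constant $A'$ depending only on $V,C_0,A,\delta,\epsilon$ (not on $R$, $E$, $y$) such that $$|E(r)-RV|\le A'\left(r^{\frac43\delta-\frac13}+R^\epsilon\right)\qquad\text{for all } r\ge R.$$
   Context: In the paper this is applied with $R=r_k$, $V=\mathrm{Vol}(Y)$, $E=\hat E$ the energy of the min-max generator, and $y=y_2=(\hat{cs}+2\hat e_\mu)/r$. *)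

theory Defs
  imports "HOL-Analysis.Analysis"
begin

end

theory Submission
  imports Defs
begin

text \<open>
  Put \<open>F = E - y\<close> and \<open>p = 4\<delta>/3 - 1/3\<close>. The a priori bound on \<open>E\<close> turns the hypothesis on \<open>y\<close>
  into \<open>|y t| \<le> K (R^(4/3) t^(-1/3) + t^p)\<close>. The two terms balance at \<open>T = R^(4/(3\<delta>+1))\<close>, and
  the lower bound on \<open>\<epsilon>\<close> says exactly \<open>T^\<delta> \<le> R^\<epsilon>\<close>. Up to \<open>T\<close> the a priori bound thus already
  gives \<open>|E r - RV| \<le> 2A R^\<epsilon>\<close>. Beyond \<open>T\<close>, integrating \<open>|F'| = |y|/s\<close> from \<open>T\<close> to \<open>r\<close> gives
  \<open>|F r - F T| \<le> 3K T^\<delta> + K |r^p - T^p| / |p|\<close> (this is where \<open>\<delta> \<noteq> 1/4\<close> enters), and the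
  bounds on \<open>y T\<close>, \<open>y r\<close> and \<open>E T\<close> complete the estimate.
\<close>

lemma powr_add_le_two_powr:
  fixes a b q :: real
  assumes "0 \<le> a" "0 \<le> b" "0 \<le> q"
  shows "(a + b) powr q \<le> 2 powr q * (a powr q + b powr q)"
proof -
  have max_le: "max a b powr q \<le> a powr q + b powr q"
    by (simp add: max_def)
  have "(a + b) powr q \<le> (2 * max a b) powr q"
    using assms by (intro powr_mono2) auto
  also have "\<dots> = 2 powr q * max a b powr q"
    by (rule powr_mult)
  also have "\<dots> \<le> 2 powr q * (a powr q + b powr q)"
    using max_le by (intro mult_left_mono) auto
  finally show ?thesis .
qed

lemma piecewise_differentiable_increment_le:
  fixes f f' g g' :: "real \<Rightarrow> real"
  assumes "a \<le> b"
    and f: "f piecewise_differentiable_on {a..b}"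
    and f': "\<And>x. a < x \<Longrightarrow> x < b \<Longrightarrow> f differentiable (at x) \<Longrightarrow>
               (f has_real_derivative f' x) (at x)"
    and g': "\<And>x. a < x \<Longrightarrow> x < b \<Longrightarrow> (g has_real_derivative g' x) (at x)"
    and g: "continuous_on {a..b} g"
    and f'_le_g': "\<And>x. a \<le> x \<Longrightarrow> x \<le> b \<Longrightarrow> \<bar>f' x\<bar> \<le> g' x"
  shows "\<bar>f b - f a\<bar> \<le> g b - g a"
proof -
  obtain S where "finite S"
    and S: "\<And>x. x \<in> {a..b} - S \<Longrightarrow> f differentiable (at x within {a..b})"
    using f unfolding piecewise_differentiable_on_def by blast
  have f_int: "(f' has_integral f b - f a) {a..b}"
  proof (rule fundamental_theorem_of_calculus_interior_strong[OF \<open>finite S\<close> \<open>a \<le> b\<close>])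
    fix x assume x: "x \<in> {a<..<b} - S"
    then have "f differentiable (at x within {a..b})"
      using S by auto
    then have "f differentiable (at x)"
      using x at_within_Icc_at[of a x b] by simp
    then show "(f has_vector_derivative f' x) (at x)"
      using f' x by (simp add: has_real_derivative_iff_has_vector_derivative)
  next
    show "continuous_on {a..b} f"
      using f by (simp add: piecewise_differentiable_on_def)
  qed
  have g_int: "(g' has_integral g b - g a) {a..b}"
    using \<open>a \<le> b\<close> g g'
    by (intro fundamental_theorem_of_calculus_interior_strong[of "{}"])
       (auto simp: has_real_derivative_iff_has_vector_derivative)
  have "f b - f a \<le> g b - g a"
    using f'_le_g' by (intro has_integral_le[OF f_int g_int]) (auto simp: abs_le_iff)
  moreover have "- (f b - f a) \<le> g b - g a"
    using f'_le_g' by (intro has_integral_le[OF has_integral_neg[OF f_int] g_int])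
      (auto simp: abs_le_iff)
  ultimately show ?thesis
    by linarith
qed

locale decay_constants =
  fixes V C\<^sub>0 A \<delta> \<epsilon> :: real
  assumes V_pos: "V > 0" and C0_pos: "C\<^sub>0 > 0" and A_pos: "A > 0"
    and \<delta>_pos: "0 < \<delta>" and \<delta>_less_1: "\<delta> < 1" and \<delta>_neq: "\<delta> \<noteq> 1/4"
    and \<epsilon>_ge: "4 * \<delta> / (3 * \<delta> + 1) \<le> \<epsilon>" and \<epsilon>_less_1: "\<epsilon> < 1"
begin

definition p :: real where "p = 4/3 * \<delta> - 1/3"

definition K :: real where "K = C\<^sub>0 * (2 * (V + A)) powr (4/3)"

lemma K_pos: "K > 0"
  using C0_pos V_pos A_pos by (simp add: K_def)

lemma p_neq_0: "p \<noteq> 0"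
  using \<delta>_neq by (simp add: p_def)

lemma p_le_\<delta>: "p \<le> \<delta>"
  using \<delta>_less_1 by (simp add: p_def)

end

locale decay_solution = decay_constants +
  fixes R :: real and E y :: "real \<Rightarrow> real"
  assumes R_ge_2: "R \<ge> 2"
    and piecewise_differentiable:
      "\<And>b. (\<lambda>r. E r - y r) piecewise_differentiable_on {R..b}"
    and derivative_E_minus_y:
      "\<And>r. R < r \<Longrightarrow> (\<lambda>s. E s - y s) differentiable (at r) \<Longrightarrow>
         ((\<lambda>s. E s - y s) has_real_derivative y r / r) (at r)"
    and abs_y_le_E: "\<And>r. R \<le> r \<Longrightarrow> \<bar>y r\<bar> \<le> C\<^sub>0 * r powr (-1/3) * \<bar>E r\<bar> powr (4/3)"
    and E_deviation_a_priori: "\<And>r. R \<le> r \<Longrightarrow> \<bar>E r - R * V\<bar> \<le> A * (r powr \<delta> + R powr \<epsilon>)"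
begin

definition T :: real where "T = R powr (4 / (3 * \<delta> + 1))"

lemma R_le_T: "R \<le> T"
proof -
  have "1 \<le> 4 / (3 * \<delta> + 1)"
    using \<delta>_less_1 \<delta>_pos by (simp add: field_simps)
  then show ?thesis
    using powr_mono[of 1 "4 / (3 * \<delta> + 1)" R] R_ge_2 by (simp add: T_def)
qed

lemma T_pos: "T > 0"
  using R_le_T R_ge_2 by linarith

lemma T_powr_\<delta>_le: "T powr \<delta> \<le> R powr \<epsilon>"
proof -
  have "T powr \<delta> = R powr (4 * \<delta> / (3 * \<delta> + 1))"
    by (simp add: T_def powr_powr)
  also have "\<dots> \<le> R powr \<epsilon>"
    using \<epsilon>_ge R_ge_2 by (intro powr_mono) auto
  finally show ?thesis .
qed

lemma T_powr_p_le: "T powr p \<le> R powr \<epsilon>"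
  using powr_mono[OF p_le_\<delta>, of T] R_le_T R_ge_2 T_powr_\<delta>_le by linarith

lemma R_T_balance: "R powr (4/3) * T powr (-1/3) = T powr \<delta>"
proof -
  have "R powr (4/3) * T powr (-1/3) = R powr (4/3) * R powr (4 / (3 * \<delta> + 1) * (-1/3))"
    by (simp add: T_def powr_powr)
  also have "\<dots> = R powr (4/3 + 4 / (3 * \<delta> + 1) * (-1/3))"
    by (rule powr_add[symmetric])
  also have "4/3 + 4 / (3 * \<delta> + 1) * (-1/3) = 4 / (3 * \<delta> + 1) * \<delta>"
    using \<delta>_pos by (simp add: field_simps)
  finally show ?thesis
    by (simp add: T_def powr_powr)
qed

lemma abs_E_le: "R \<le> t \<Longrightarrow> \<bar>E t\<bar> \<le> (V + A) * (R + t powr \<delta>)"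
proof -
  assume "R \<le> t"
  have "A * R powr \<epsilon> \<le> A * R"
    using powr_mono[of \<epsilon> 1 R] \<epsilon>_less_1 R_ge_2 A_pos by auto
  moreover have "0 \<le> V * t powr \<delta>" "0 \<le> R * V"
    using V_pos R_ge_2 by simp_all
  ultimately show ?thesis
    using E_deviation_a_priori[OF \<open>R \<le> t\<close>] by (simp add: algebra_simps abs_le_iff)
qed

lemma abs_y_le: "R \<le> t \<Longrightarrow> \<bar>y t\<bar> \<le> K * (R powr (4/3) * t powr (-1/3) + t powr p)"
proof -
  assume t: "R \<le> t"
  have two_VA: "(2 * (V + A)) powr (4/3) = 2 powr (4/3) * (V + A) powr (4/3)"
    by (rule powr_mult)
  have "\<bar>E t\<bar> powr (4/3) \<le> ((V + A) * (R + t powr \<delta>)) powr (4/3)"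
    using abs_E_le[OF t] by (intro powr_mono2) auto
  also have "\<dots> = (V + A) powr (4/3) * (R + t powr \<delta>) powr (4/3)"
    by (rule powr_mult)
  also have "\<dots> \<le> (V + A) powr (4/3) * (2 powr (4/3) * (R powr (4/3) + t powr (4/3 * \<delta>)))"
    using powr_add_le_two_powr[of R "t powr \<delta>" "4/3"] R_ge_2
    by (intro mult_left_mono) (auto simp: powr_powr mult.commute)
  also have "\<dots> = (2 * (V + A)) powr (4/3) * (R powr (4/3) + t powr (4/3 * \<delta>))"
    unfolding two_VA by (simp only: mult_ac)
  finally have E_powr_le: "\<bar>E t\<bar> powr (4/3) \<le> \<dots>" .
  have "t powr (-1/3) * t powr (4/3 * \<delta>) = t powr p"
    by (simp add: p_def powr_add[symmetric])
  then have "C\<^sub>0 * t powr (-1/3) * ((2 * (V + A)) powr (4/3) * (R powr (4/3) + t powr (4/3 * \<delta>)))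
      = K * (R powr (4/3) * t powr (-1/3) + t powr p)"
    by (simp add: K_def algebra_simps)
  moreover have "C\<^sub>0 * t powr (-1/3) * \<bar>E t\<bar> powr (4/3)
      \<le> C\<^sub>0 * t powr (-1/3) * ((2 * (V + A)) powr (4/3) * (R powr (4/3) + t powr (4/3 * \<delta>)))"
    using E_powr_le C0_pos by (intro mult_left_mono) auto
  ultimately show ?thesis
    using abs_y_le_E[OF t] by linarith
qed

lemma abs_y_le_beyond_T: "T \<le> t \<Longrightarrow> \<bar>y t\<bar> \<le> K * (R powr \<epsilon> + t powr p)"
proof -
  assume t: "T \<le> t"
  have "R powr (4/3) * t powr (-1/3) \<le> R powr (4/3) * T powr (-1/3)"
    using t T_pos by (intro mult_left_mono powr_mono2') auto
  then have "R powr (4/3) * t powr (-1/3) \<le> R powr \<epsilon>"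
    using R_T_balance T_powr_\<delta>_le by linarith
  then have "K * (R powr (4/3) * t powr (-1/3) + t powr p) \<le> K * (R powr \<epsilon> + t powr p)"
    using K_pos by (intro mult_left_mono) auto
  then show ?thesis
    using abs_y_le[of t] t R_le_T by linarith
qed

definition majorant :: "real \<Rightarrow> real"
  where "majorant s = K * (s powr p / p - 3 * R powr (4/3) * s powr (-1/3))"

lemma majorant_has_derivative:
  assumes "0 < s"
  shows "(majorant has_real_derivative K * (R powr (4/3) * s powr (-4/3) + s powr (p - 1))) (at s)"
proof -
  have "(majorant has_real_derivative
      K * (p * s powr (p - 1) / p - 3 * R powr (4/3) * ((-1/3) * s powr (-1/3 - 1)))) (at s)"
    unfolding majorant_def[abs_def]
    by (intro DERIV_cmult DERIV_diff DERIV_cdivide has_real_derivative_powr assms)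
  then show ?thesis
    using p_neq_0 by (simp add: add.commute)
qed

lemma abs_y_div_le: "T \<le> s \<Longrightarrow> \<bar>y s / s\<bar> \<le> K * (R powr (4/3) * s powr (-4/3) + s powr (p - 1))"
proof -
  assume s: "T \<le> s"
  then have "0 < s"
    using T_pos by linarith
  have powr_minus_1: "s powr (z - 1) = s powr z / s" for z
    using \<open>0 < s\<close> by (subst powr_diff) simp
  have "\<bar>y s\<bar> / s \<le> K * (R powr (4/3) * s powr (-1/3) + s powr p) / s"
    using abs_y_le[of s] s R_le_T \<open>0 < s\<close> by (intro divide_right_mono) auto
  also have "\<dots> = K * (R powr (4/3) * s powr (-4/3) + s powr (p - 1))"
    using powr_minus_1[of "-1/3"] powr_minus_1[of p] by (simp add: field_simps add_divide_distrib)
  finally show ?thesis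
    using \<open>0 < s\<close> by simp
qed

lemma majorant_increment_le:
  assumes "T \<le> r"
  shows "majorant r - majorant T \<le> K * (3 * R powr \<epsilon> + (r powr p + R powr \<epsilon>) / \<bar>p\<bar>)"
proof -
  have "0 \<le> R powr (4/3) * r powr (-1/3)"
    by simp
  then have "3 * (R powr (4/3) * T powr (-1/3)) - 3 * (R powr (4/3) * r powr (-1/3)) \<le> 3 * R powr \<epsilon>"
    using R_T_balance T_powr_\<delta>_le by linarith
  moreover have "(r powr p - T powr p) / p \<le> (r powr p + R powr \<epsilon>) / \<bar>p\<bar>"
  proof -
    have "(r powr p - T powr p) / p \<le> \<bar>r powr p - T powr p\<bar> / \<bar>p\<bar>"
      by (metis abs_divide abs_ge_self)
    also have "\<dots> \<le> (r powr p + R powr \<epsilon>) / \<bar>p\<bar>"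
    proof (rule divide_right_mono)
      show "\<bar>r powr p - T powr p\<bar> \<le> r powr p + R powr \<epsilon>"
        using T_powr_p_le powr_ge_zero[of r p] powr_ge_zero[of T p] by arith
    qed simp
    finally show ?thesis .
  qed
  ultimately have "(r powr p - T powr p) / p
      + (3 * (R powr (4/3) * T powr (-1/3)) - 3 * (R powr (4/3) * r powr (-1/3)))
      \<le> 3 * R powr \<epsilon> + (r powr p + R powr \<epsilon>) / \<bar>p\<bar>"
    by linarith
  from mult_left_mono[OF this less_imp_le[OF K_pos]] show ?thesis
    by (simp add: majorant_def algebra_simps diff_divide_distrib)
qed

lemma E_minus_y_increment_le:
  assumes "T \<le> r"
  shows "\<bar>(E r - y r) - (E T - y T)\<bar> \<le> K * (3 * R powr \<epsilon> + (r powr p + R powr \<epsilon>) / \<bar>p\<bar>)"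
proof -
  have "\<bar>(E r - y r) - (E T - y T)\<bar> \<le> majorant r - majorant T"
  proof (rule piecewise_differentiable_increment_le[OF assms])
    show "(\<lambda>s. E s - y s) piecewise_differentiable_on {T..r}"
      using piecewise_differentiable_on_subset[OF piecewise_differentiable[of r]] R_le_T by auto
    show "((\<lambda>s. E s - y s) has_real_derivative y x / x) (at x)"
      if "T < x" "(\<lambda>s. E s - y s) differentiable (at x)" for x
      using derivative_E_minus_y that R_le_T by auto
    show "(majorant has_real_derivative K * (R powr (4/3) * x powr (-4/3) + x powr (p - 1))) (at x)"
      if "T < x" for x
      using majorant_has_derivative that T_pos by auto
    show "continuous_on {T..r} majorant"
    proof (intro continuous_at_imp_continuous_on ballI)
      show "isCont majorant x" if "x \<in> {T..r}" for x
        using majorant_has_derivative[THEN DERIV_isCont] that T_pos by auto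
    qed
    show "\<bar>y x / x\<bar> \<le> K * (R powr (4/3) * x powr (-4/3) + x powr (p - 1))" if "T \<le> x" for x
      using abs_y_div_le that by auto
  qed
  then show ?thesis
    using majorant_increment_le[OF assms] by linarith
qed

lemma E_deviation_le:
  assumes "R \<le> r"
  shows "\<bar>E r - R * V\<bar> \<le> (2 * A + 6 * K + K / \<bar>p\<bar>) * (r powr p + R powr \<epsilon>)"
proof (cases "r \<le> T")
  case True
  have "r powr \<delta> \<le> T powr \<delta>"
    using True R_ge_2 assms \<delta>_pos by (intro powr_mono2) auto
  then have "A * (r powr \<delta> + R powr \<epsilon>) \<le> A * (2 * R powr \<epsilon>)"
    using T_powr_\<delta>_le A_pos by (intro mult_left_mono) auto
  then have "\<bar>E r - R * V\<bar> \<le> 2 * A * R powr \<epsilon>"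
    using E_deviation_a_priori[OF assms] by simp
  also have "\<dots> \<le> (2 * A + 6 * K + K / \<bar>p\<bar>) * (r powr p + R powr \<epsilon>)"
    using A_pos K_pos by (intro mult_mono) auto
  finally show ?thesis .
next
  case False
  have "A * (T powr \<delta> + R powr \<epsilon>) \<le> A * (2 * R powr \<epsilon>)"
    using T_powr_\<delta>_le A_pos by (intro mult_left_mono) auto
  then have E_T: "\<bar>E T - R * V\<bar> \<le> 2 * A * R powr \<epsilon>"
    using E_deviation_a_priori[OF R_le_T] by simp
  have "K * (R powr \<epsilon> + T powr p) \<le> K * (2 * R powr \<epsilon>)"
    using T_powr_p_le K_pos by (intro mult_left_mono) auto
  then have y_T: "\<bar>y T\<bar> \<le> 2 * K * R powr \<epsilon>"
    using abs_y_le_beyond_T[of T] by simp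
  have y_r: "\<bar>y r\<bar> \<le> K * R powr \<epsilon> + K * r powr p"
    using abs_y_le_beyond_T[of r] False by (simp add: algebra_simps)
  have increment: "\<bar>(E r - y r) - (E T - y T)\<bar>
      \<le> 3 * K * R powr \<epsilon> + K / \<bar>p\<bar> * (r powr p + R powr \<epsilon>)"
    using E_minus_y_increment_le[of r] False by (simp add: algebra_simps)
  have "0 \<le> A * r powr p" "0 \<le> K * r powr p"
    using A_pos K_pos by simp_all
  then show ?thesis
    using E_T y_T y_r increment by (simp add: algebra_simps abs_le_iff)
qed

end

theorem mainTheorem11:
  fixes V C\<^sub>0 A \<delta> \<epsilon> :: real
  assumes "V > 0" and "C\<^sub>0 > 0" and "A > 0"
    and "0 < \<delta>" and "\<delta> < 1" and "\<delta> \<noteq> 1/4"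
    and "4 * \<delta> / (3 * \<delta> + 1) \<le> \<epsilon>" and "\<epsilon> < 1"
  shows "\<exists>A'::real. \<forall>(R::real) (E::real \<Rightarrow> real) (y::real \<Rightarrow> real).
     R \<ge> 2
     \<and> continuous_on {R..} (\<lambda>r. E r - y r)
     \<and> (\<forall>b. (\<lambda>r. E r - y r) piecewise_differentiable_on {R..b})
     \<and> (\<forall>r>R. (\<lambda>s. E s - y s) differentiable (at r) \<longrightarrow>
            ((\<lambda>s. E s - y s) has_real_derivative (y r / r)) (at r))
     \<and> (\<forall>r\<ge>R. \<bar>y r\<bar> \<le> C\<^sub>0 * r powr (-1/3) * \<bar>E r\<bar> powr (4/3))
     \<and> (\<forall>r\<ge>R. \<bar>E r - R * V\<bar> \<le> A * (r powr \<delta> + R powr \<epsilon>))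
     \<longrightarrow> (\<forall>r\<ge>R. \<bar>E r - R * V\<bar> \<le> A' * (r powr (4/3 * \<delta> - 1/3) + R powr \<epsilon>))"
proof -
  interpret decay_constants V C\<^sub>0 A \<delta> \<epsilon>
    using assms by unfold_locales
  define A' where "A' = 2 * A + 6 * K + K / \<bar>p\<bar>"
  have "\<bar>E r - R * V\<bar> \<le> A' * (r powr (4/3 * \<delta> - 1/3) + R powr \<epsilon>)"
    if "decay_solution V C\<^sub>0 A \<delta> \<epsilon> R E y" and "R \<le> r" for R E y r
    using decay_solution.E_deviation_le[OF that] by (simp add: A'_def p_def)
  \<comment> \<open>Continuity of \<open>E - y\<close> is part of piecewise differentiability.\<close>
  then show ?thesis
    unfolding decay_solution_def decay_solution_axioms_def
    by (intro exI[of _ A'] allI impI) (use decay_constants_axioms in blast)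
qed

end
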